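(* Let $S_1,\ldots,S_m$ be propositional formulae ($m\ge 1$). The lexicographic orders $[S_1,\ldots,S_{m-1},S_m]$ and $[S_1,\ldots,S_{m-1}]$ are equivalent if and only if $S_m$ is equivalent to the disjunction of some (possibly none) of the formulae $Q = (B_1 \equiv S_1) \wedge \cdots \wedge (B_{m-1} \equiv S_{m-1})$, where each $B_i$ is either $\top$ or $\bot$.
   Context: Formulae are propositional over a finite alphabet; models are truth assignments. For a formula $F$, the order induced by $F$ is: $I \leq_F J$ iff $I \models F$ or $J \not\models F$. For a finite sequence of formulae $S=[S_1,\ldots,S_m]$, the lexicographic order $\leq_S$ is defined recursively: $I \leq_S J$ holds iff either $S=[]$, or ($I \leq_{S_1} J$ and (either $J \not\leq_{S_1} I$ or $I \leq_R J$)), where $R=[S_2,\ldots,S_m]$. Two sequences $S$ and $R$ are equivalent, written $S\equiv R$, if $I \leq_S J$ and $I\leq_R J$ coincide for all pairs of models $I,J$. The empty disjunction is $\bot$. *)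

theory Defs
  imports Main
begin

datatype 'a form = Atom 'a | Top | Bot | Neg "'a form"
  | Conj "'a form" "'a form" | Disj "'a form" "'a form" | Iff "'a form" "'a form"

fun sat :: "('a \<Rightarrow> bool) \<Rightarrow> 'a form \<Rightarrow> bool" where
  "sat I (Atom x) = I x"
| "sat I Top = True"
| "sat I Bot = False"
| "sat I (Neg F) = (\<not> sat I F)"
| "sat I (Conj F G) = (sat I F \<and> sat I G)"
| "sat I (Disj F G) = (sat I F \<or> sat I G)"
| "sat I (Iff F G) = (sat I F = sat I G)"

definition form_equiv :: "'a form \<Rightarrow> 'a form \<Rightarrow> bool" where
  "form_equiv F G = (\<forall>I. sat I F = sat I G)"

definition le_form :: "'a form \<Rightarrow> ('a \<Rightarrow> bool) \<Rightarrow> ('a \<Rightarrow> bool) \<Rightarrow> bool" where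
  "le_form F I J = (sat I F \<or> \<not> sat J F)"

fun le_lex :: "'a form list \<Rightarrow> ('a \<Rightarrow> bool) \<Rightarrow> ('a \<Rightarrow> bool) \<Rightarrow> bool" where
  "le_lex [] I J = True"
| "le_lex (F # R) I J = (le_form F I J \<and> (\<not> le_form F J I \<or> le_lex R I J))"

definition lex_equiv :: "'a form list \<Rightarrow> 'a form list \<Rightarrow> bool" where
  "lex_equiv S R = (\<forall>I J. le_lex S I J = le_lex R I J)"

definition Conjs :: "'a form list \<Rightarrow> 'a form" where
  "Conjs Fs = foldr Conj Fs Top"

definition Disjs :: "'a form list \<Rightarrow> 'a form" where
  "Disjs Fs = foldr Disj Fs Bot"

definition Qform :: "bool list \<Rightarrow> 'a form list \<Rightarrow> 'a form" where
  "Qform Bs Ss = Conjs (map2 (\<lambda>b s. Iff (if b then Top else Bot) s) Bs Ss)"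

end

theory Submission
  imports Defs
begin

text \<open>Appending \<open>F\<close> to \<open>S\<close> only refines \<open>\<le>\<^sub>S\<close> on pairs of models that agree on every
  formula of \<open>S\<close>, and such pairs are \<open>\<le>\<^sub>S\<close>-equivalent. So the two orders coincide iff the truth
  value of \<open>F\<close> is a function of the truth vector \<open>map (sat I) S\<close>. Such an \<open>F\<close> is the
  disjunction of the formulae \<open>Qform Bs S\<close> over the (finitely many) vectors \<open>Bs\<close> of its models,
  because \<open>Qform Bs S\<close> holds exactly in the models with truth vector \<open>Bs\<close>.\<close>

lemma sat_Disjs: "sat I (Disjs Fs) \<longleftrightarrow> (\<exists>F\<in>set Fs. sat I F)"
  by (induction Fs) (auto simp: Disjs_def)

lemma sat_Qform:
  "length Bs = length S \<Longrightarrow> sat I (Qform Bs S) \<longleftrightarrow> Bs = map (sat I) S"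
proof (induction S arbitrary: Bs)
  case Nil
  then show ?case by (simp add: Qform_def Conjs_def)
next
  case (Cons s S)
  then obtain b Bs' where "Bs = b # Bs'" "length Bs' = length S"
    by (cases Bs) auto
  with Cons.IH[of Bs'] show ?case by (auto simp: Qform_def Conjs_def)
qed

lemma sat_Disjs_Qform:
  assumes "\<forall>Bs\<in>set Bss. length Bs = length S"
  shows "sat I (Disjs (map (\<lambda>Bs. Qform Bs S) Bss)) \<longleftrightarrow> map (sat I) S \<in> set Bss"
  using assms by (auto simp: sat_Disjs sat_Qform)

lemma le_lex_snoc:
  "le_lex (S @ [F]) I J =
    (if map (sat I) S = map (sat J) S then le_form F I J else le_lex S I J)"
  by (induction S) (auto simp: le_form_def)

lemma le_lex_if_same_truth_values: "map (sat I) S = map (sat J) S \<Longrightarrow> le_lex S I J"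
  by (induction S) (auto simp: le_form_def)

lemma lex_equiv_snoc_iff:
  "lex_equiv (S @ [F]) S \<longleftrightarrow>
    (\<forall>I J. map (sat I) S = map (sat J) S \<longrightarrow> sat I F = sat J F)"
proof -
  have "lex_equiv (S @ [F]) S \<longleftrightarrow>
      (\<forall>I J. map (sat I) S = map (sat J) S \<longrightarrow> le_form F I J)"
    by (auto simp: lex_equiv_def le_lex_snoc le_lex_if_same_truth_values)
  also have "\<dots> \<longleftrightarrow> (\<forall>I J. map (sat I) S = map (sat J) S \<longrightarrow> sat I F = sat J F)"
    unfolding le_form_def by metis
  finally show ?thesis .
qed

lemma equiv_Disjs_Qform_iff:
  "(\<exists>Bss. (\<forall>Bs\<in>set Bss. length Bs = length S) \<and>
          form_equiv F (Disjs (map (\<lambda>Bs. Qform Bs S) Bss))) \<longleftrightarrow>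
    (\<forall>I J. map (sat I) S = map (sat J) S \<longrightarrow> sat I F = sat J F)"
  (is "?disj \<longleftrightarrow> ?determined")
proof
  assume ?disj
  then obtain Bss where "\<forall>Bs\<in>set Bss. length Bs = length S"
    and "form_equiv F (Disjs (map (\<lambda>Bs. Qform Bs S) Bss))"
    by blast
  then have "sat I F \<longleftrightarrow> map (sat I) S \<in> set Bss" for I
    by (simp add: form_equiv_def sat_Disjs_Qform)
  then show ?determined by (intro allI impI) (simp only:)
next
  assume determined: ?determined
  let ?models = "{map (sat I) S | I. sat I F}"
  have "?models \<subseteq> {Bs. length Bs = length S}"
    by auto
  then have "finite ?models"
    using finite_list_length by (rule finite_subset)
  then obtain Bss where Bss: "set Bss = ?models"
    by (meson finite_list)
  then have lengths: "\<forall>Bs\<in>set Bss. length Bs = length S"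
    by auto
  have "sat I F \<longleftrightarrow> map (sat I) S \<in> set Bss" for I
    using determined unfolding Bss by auto
  with lengths show ?disj
    by (auto simp: form_equiv_def sat_Disjs_Qform)
qed

theorem theorem3:
  fixes S :: "'a::finite form list" and Sm :: "'a form"
  shows "lex_equiv (S @ [Sm]) S \<longleftrightarrow>
    (\<exists>Bss. (\<forall>Bs\<in>set Bss. length Bs = length S) \<and>
           form_equiv Sm (Disjs (map (\<lambda>Bs. Qform Bs S) Bss)))"
  by (simp only: lex_equiv_snoc_iff equiv_Disjs_Qform_iff)

end
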